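(* Let $A,B\subset\mathbb{R}^n$ be set-germs at $0$ with $0\in\overline{A}\cap\overline{B}$, and let $h:(\mathbb{R}^n,0)\to(\mathbb{R}^n,0)$ be a bi-Lipschitz homeomorphism (germ). Suppose that $B$ and $h(B)$ satisfy condition $(SSP)$. Then $D(A)\subset D(B)$ if and only if $D(h(A))\subset D(h(B))$.
   Context: A bi-Lipschitz homeomorphism germ is a homeomorphism between neighbourhoods of $0$ fixing $0$ with $K_1|x-y|\le|h(x)-h(y)|\le K_2|x-y|$ for some $0<K_1\le K_2$ near $0$. Direction set: $D(A)=\{a\in S^{n-1} : \exists\, \{x_i\}\subset A\setminus\{0\},\ x_i\to 0,\ x_i/\|x_i\|\to a\}$. A set-germ $A$ at $0$ with $0\in\overline{A}$ satisfies condition $(SSP)$ if for every sequence $\{a_m\}\subset\mathbb{R}^n$ with $a_m\to 0$ and $\lim_{m\to\infty} a_m/\|a_m\|\in D(A)$, there is a sequence $\{b_m\}\subset A$ with $\|a_m-b_m\|\ll\|a_m\|,\|b_m\|$ (i.e. $\|a_m-b_m\|/\|a_m\|\to0$ and $\|a_m-b_m\|/\|b_m\|\to0$). *)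

theory Defs
  imports "HOL-Analysis.Analysis"
begin

definition direction_set :: "'a::euclidean_space set \<Rightarrow> 'a set" where
  "direction_set A = {a. norm a = 1 \<and>
     (\<exists>x::nat \<Rightarrow> 'a. (\<forall>i. x i \<in> A - {0}) \<and> x \<longlonglongrightarrow> 0 \<and>
        (\<lambda>i. x i /\<^sub>R norm (x i)) \<longlonglongrightarrow> a)}"

definition SSP :: "'a::euclidean_space set \<Rightarrow> bool" where
  "SSP A \<longleftrightarrow> 0 \<in> closure A \<and>
     (\<forall>a::nat \<Rightarrow> 'a. (\<forall>m. a m \<noteq> 0) \<and> a \<longlonglongrightarrow> 0 \<and>
        (\<exists>v \<in> direction_set A. (\<lambda>m. a m /\<^sub>R norm (a m)) \<longlonglongrightarrow> v)
      \<longrightarrow> (\<exists>b::nat \<Rightarrow> 'a. (\<forall>m. b m \<in> A) \<and>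
             (\<lambda>m. norm (a m - b m) / norm (a m)) \<longlonglongrightarrow> 0 \<and>
             (\<lambda>m. norm (a m - b m) / norm (b m)) \<longlonglongrightarrow> 0))"

text \<open>A bi-Lipschitz homeomorphism germ at 0, represented by a map h that is a
  homeomorphism from the open neighbourhood U of 0 onto the open set h ` U,
  fixes 0, and is bi-Lipschitz on some neighbourhood of 0.\<close>
definition bilipschitz_homeo_germ :: "('a::euclidean_space \<Rightarrow> 'a) \<Rightarrow> 'a set \<Rightarrow> bool" where
  "bilipschitz_homeo_germ h U \<longleftrightarrow> open U \<and> 0 \<in> U \<and> h 0 = 0 \<and> open (h ` U) \<and>
     (\<exists>g. homeomorphism U (h ` U) h g) \<and>
     (\<exists>W K1 K2. open W \<and> 0 \<in> W \<and> W \<subseteq> U \<and> 0 < K1 \<and> K1 \<le> K2 \<and>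
        (\<forall>x\<in>W. \<forall>y\<in>W. K1 * dist x y \<le> dist (h x) (h y) \<and> dist (h x) (h y) \<le> K2 * dist x y))"

end

theory Submission
  imports Defs
begin

text \<open>Pull a sequence realising a direction of h(A) back to A and pass to a subsequence whose
  directions converge, necessarily to a direction of A, hence of B. Condition (SSP) for B
  supplies points of B at relative distance o(1) from this sequence. A bi-Lipschitz map
  distorts relative distances by at most the factor K2/K1, so their images are at relative
  distance o(1) from the original sequence in h(A) and therefore have the same limit direction.
  The converse follows by applying this to the inverse homeomorphism, which is again
  bi-Lipschitz.\<close>

definition relatively_close :: "(nat \<Rightarrow> 'a::real_normed_vector) \<Rightarrow> (nat \<Rightarrow> 'a) \<Rightarrow> bool" where
  "relatively_close x z \<longleftrightarrow> (\<lambda>m. norm (x m - z m) / norm (x m)) \<longlonglongrightarrow> 0"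

lemma norm_sgn_diff_le:
  fixes u w :: "'a::real_normed_vector"
  assumes "w \<noteq> 0"
  shows "norm (sgn u - sgn w) \<le> 2 * (norm (w - u) / norm w)"
proof (cases "u = 0")
  case True
  then show ?thesis using assms by (simp add: norm_sgn)
next
  case False
  have nw: "norm w > 0" and nu: "norm u > 0" using assms False by simp_all
  have decomp: "sgn u - sgn w = (u - w) /\<^sub>R norm w + (1 / norm u - 1 / norm w) *\<^sub>R u"
    using nw nu by (simp add: sgn_div_norm algebra_simps divide_inverse)
  have "norm ((1 / norm u - 1 / norm w) *\<^sub>R u) = \<bar>norm w - norm u\<bar> / norm w"
    using nw nu by (simp add: field_simps abs_mult abs_divide)
  also have "\<dots> \<le> norm (w - u) / norm w"
    using nw norm_triangle_ineq3[of w u] by (intro divide_right_mono) auto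
  finally have "norm ((1 / norm u - 1 / norm w) *\<^sub>R u) \<le> norm (w - u) / norm w" .
  moreover have "norm ((u - w) /\<^sub>R norm w) = norm (w - u) / norm w"
    by (simp add: divide_inverse_commute norm_minus_commute[of u])
  ultimately show ?thesis
    unfolding decomp using norm_triangle_ineq[of "(u - w) /\<^sub>R norm w" "(1 / norm u - 1 / norm w) *\<^sub>R u"]
    by linarith
qed

lemma relatively_close_tendsto_zero:
  assumes "\<forall>m. x m \<noteq> 0" "x \<longlonglongrightarrow> 0" "relatively_close x z"
  shows "z \<longlonglongrightarrow> 0"
proof -
  have "(\<lambda>m. norm (x m - z m) / norm (x m) * norm (x m)) \<longlonglongrightarrow> 0 * 0"
    using assms(2,3) unfolding relatively_close_def by (intro tendsto_mult tendsto_norm_zero)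
  then have "(\<lambda>m. norm (x m - z m)) \<longlonglongrightarrow> 0"
    using assms(1) by simp
  then have "(\<lambda>m. x m - z m) \<longlonglongrightarrow> 0"
    by (rule tendsto_norm_zero_cancel)
  from tendsto_diff[OF assms(2) this] show ?thesis by simp
qed

lemma relatively_close_eventually_nonzero:
  assumes "\<forall>m. x m \<noteq> 0" "relatively_close x z"
  shows "eventually (\<lambda>m. z m \<noteq> 0) sequentially"
  using order_tendstoD(2)[OF assms(2)[unfolded relatively_close_def] zero_less_one]
  by eventually_elim (use assms(1) in auto)

lemma relatively_close_sgn_tendsto:
  assumes "\<forall>m. x m \<noteq> 0" "relatively_close x z" "(\<lambda>m. sgn (x m)) \<longlonglongrightarrow> v"
  shows "(\<lambda>m. sgn (z m)) \<longlonglongrightarrow> v"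
proof -
  have bound: "\<forall>m. norm (sgn (z m) - sgn (x m)) \<le> 2 * (norm (x m - z m) / norm (x m))"
    using assms(1) norm_sgn_diff_le by blast
  have "(\<lambda>m. 2 * (norm (x m - z m) / norm (x m))) \<longlonglongrightarrow> 0"
    using assms(2) unfolding relatively_close_def by (rule tendsto_mult_right_zero)
  then have "(\<lambda>m. sgn (z m) - sgn (x m)) \<longlonglongrightarrow> 0"
    by (rule Lim_null_comparison[OF always_eventually[OF bound]])
  from tendsto_add[OF this assms(3)] show ?thesis by simp
qed

lemma relatively_close_bilipschitz_image:
  fixes f :: "'a::real_normed_vector \<Rightarrow> 'b::real_normed_vector"
  assumes W: "open W" "0 \<in> W" and "f 0 = 0" "0 < K1"
    and lip: "\<forall>u\<in>W. \<forall>w\<in>W. K1 * dist u w \<le> dist (f u) (f w) \<and> dist (f u) (f w) \<le> K2 * dist u w"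
    and x: "\<forall>m. x m \<noteq> 0" "x \<longlonglongrightarrow> 0" and "relatively_close x z"
  shows "relatively_close (f \<circ> x) (f \<circ> z)"
proof -
  have "z \<longlonglongrightarrow> 0" using relatively_close_tendsto_zero x \<open>relatively_close x z\<close> .
  then have "eventually (\<lambda>m. x m \<in> W \<and> z m \<in> W) sequentially"
    using topological_tendstoD[OF x(2) W] topological_tendstoD[OF _ W] by (intro eventually_conj)
  then have "eventually (\<lambda>m. norm (norm (f (x m) - f (z m)) / norm (f (x m)))
      \<le> K2 / K1 * (norm (x m - z m) / norm (x m))) sequentially"
  proof eventually_elim
    case (elim m)
    have upper: "norm (f (x m) - f (z m)) \<le> K2 * norm (x m - z m)"
      and lower: "K1 * norm (x m) \<le> norm (f (x m))"
      using lip elim W(2) \<open>f 0 = 0\<close> by (auto simp: dist_norm)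
    have "0 < K1 * norm (x m)" using \<open>0 < K1\<close> x(1) by simp
    then have "norm (f (x m) - f (z m)) / norm (f (x m)) \<le> K2 * norm (x m - z m) / (K1 * norm (x m))"
      using upper lower order_trans[OF norm_ge_zero upper] by (intro frac_le) auto
    then show ?case by simp
  qed
  moreover have "(\<lambda>m. K2 / K1 * (norm (x m - z m) / norm (x m))) \<longlonglongrightarrow> 0"
    using \<open>relatively_close x z\<close> unfolding relatively_close_def by (rule tendsto_mult_right_zero)
  ultimately show ?thesis
    unfolding relatively_close_def o_def by (rule Lim_null_comparison)
qed

lemma mem_direction_set_iff:
  "v \<in> direction_set A \<longleftrightarrow> norm v = 1 \<and>
     (\<exists>x. (\<forall>i. x i \<in> A - {0}) \<and> x \<longlonglongrightarrow> 0 \<and> (\<lambda>i. sgn (x i)) \<longlonglongrightarrow> v)"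
  by (simp add: direction_set_def sgn_div_norm)

lemma direction_setI_eventually:
  assumes "eventually (\<lambda>i. x i \<in> A - {0}) sequentially" "x \<longlonglongrightarrow> 0"
    and "(\<lambda>i. sgn (x i)) \<longlonglongrightarrow> v"
  shows "v \<in> direction_set A"
proof -
  obtain N where N: "\<forall>i\<ge>N. x i \<in> A - {0}" using assms(1) eventually_sequentially by auto
  have "eventually (\<lambda>i. norm (sgn (x i)) = 1) sequentially"
    using assms(1) by eventually_elim (simp add: norm_sgn)
  from tendsto_cong[OF this] tendsto_norm[OF assms(3)] have "norm v = 1"
    by (simp add: LIMSEQ_const_iff)
  then show ?thesis
    unfolding mem_direction_set_iff
    using N LIMSEQ_ignore_initial_segment[OF assms(2), of N]
      LIMSEQ_ignore_initial_segment[OF assms(3), of N]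
    by (intro conjI exI[of _ "\<lambda>i. x (i + N)"]) auto
qed

lemma direction_setI_relatively_close:
  assumes "\<forall>m. y m \<noteq> 0" "y \<longlonglongrightarrow> 0" "(\<lambda>m. sgn (y m)) \<longlonglongrightarrow> v"
    and "relatively_close y z" "eventually (\<lambda>m. z m \<in> S) sequentially"
  shows "v \<in> direction_set S"
proof -
  have "eventually (\<lambda>m. z m \<in> S - {0}) sequentially"
    using assms(5) relatively_close_eventually_nonzero[OF assms(1,4)]
    by eventually_elim blast
  then show ?thesis
    using direction_setI_eventually relatively_close_tendsto_zero[OF assms(1,2,4)]
      relatively_close_sgn_tendsto[OF assms(1,4,3)] by blast
qed

lemma direction_set_convergent_subseq:
  fixes x :: "nat \<Rightarrow> 'a::euclidean_space"
  assumes "\<forall>i. x i \<in> A - {0}" "x \<longlonglongrightarrow> 0"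
  obtains r a where "strict_mono r" "a \<in> direction_set A" "(\<lambda>i. sgn (x (r i))) \<longlonglongrightarrow> a"
proof -
  have "\<forall>i. sgn (x i) \<in> sphere 0 1" using assms(1) by (simp add: norm_sgn)
  then obtain a r where r: "strict_mono r" and lim: "((\<lambda>i. sgn (x i)) \<circ> r) \<longlonglongrightarrow> a"
    using seq_compactE[OF compact_imp_seq_compact[OF compact_sphere]] by metis
  have "a \<in> direction_set A"
    using assms lim LIMSEQ_subseq_LIMSEQ[OF assms(2) r]
    by (intro direction_setI_eventually[of "x \<circ> r"]) (auto simp: o_def)
  with r lim that show ?thesis by (simp add: o_def)
qed

lemma direction_set_Int_open:
  assumes "open U" "0 \<in> U"
  shows "direction_set (A \<inter> U) = direction_set A"
proof
  show "direction_set (A \<inter> U) \<subseteq> direction_set A"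
    unfolding direction_set_def by blast
  show "direction_set A \<subseteq> direction_set (A \<inter> U)"
  proof
    fix v assume "v \<in> direction_set A"
    then obtain x where x: "\<forall>i. x i \<in> A - {0}" "x \<longlonglongrightarrow> 0" "(\<lambda>i. sgn (x i)) \<longlonglongrightarrow> v"
      unfolding mem_direction_set_iff by blast
    have "eventually (\<lambda>i. x i \<in> A \<inter> U - {0}) sequentially"
      using topological_tendstoD[OF x(2) assms] by eventually_elim (use x(1) in auto)
    then show "v \<in> direction_set (A \<inter> U)"
      using direction_setI_eventually x(2,3) by blast
  qed
qed

lemma SSP_relatively_close:
  assumes "SSP B" "\<forall>m. x m \<noteq> 0" "x \<longlonglongrightarrow> 0"
    and "(\<lambda>m. sgn (x m)) \<longlonglongrightarrow> v" "v \<in> direction_set B"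
  obtains b where "\<forall>m. b m \<in> B" "relatively_close x b"
  using assms that unfolding SSP_def relatively_close_def by (auto simp: sgn_div_norm)

lemma bilipschitz_homeo_germ_inverse:
  assumes h: "bilipschitz_homeo_germ h U" and hom: "homeomorphism U (h ` U) h g"
  shows "bilipschitz_homeo_germ g (h ` U)"
proof -
  from h obtain W K1 K2 where W: "open W" "0 \<in> W" "W \<subseteq> U" and K: "0 < K1" "K1 \<le> K2"
    and lip: "\<forall>x\<in>W. \<forall>y\<in>W. K1 * dist x y \<le> dist (h x) (h y) \<and> dist (h x) (h y) \<le> K2 * dist x y"
    unfolding bilipschitz_homeo_germ_def by blast
  have U: "open U" "0 \<in> U" "h 0 = 0" "open (h ` U)"
    using h unfolding bilipschitz_homeo_germ_def by auto
  have gh: "\<And>u. u \<in> U \<Longrightarrow> g (h u) = u" and gU: "g ` h ` U = U"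
    using hom by (auto simp: homeomorphism_def)
  have "openin (top_of_set (h ` U)) (h ` W)"
    using homeomorphism_imp_open_map[OF hom] W by (simp add: open_subset)
  then have hW: "open (h ` W)" using U(4) openin_open_trans by blast
  have "\<forall>x\<in>h ` W. \<forall>y\<in>h ` W. 1 / K2 * dist x y \<le> dist (g x) (g y) \<and> dist (g x) (g y) \<le> 1 / K1 * dist x y"
  proof (intro ballI)
    fix x y assume "x \<in> h ` W" "y \<in> h ` W"
    then obtain p q where pq: "p \<in> W" "q \<in> W" "x = h p" "y = h q" by auto
    then have "g x = p" "g y = q" using W(3) gh by auto
    with pq lip K show "1 / K2 * dist x y \<le> dist (g x) (g y) \<and> dist (g x) (g y) \<le> 1 / K1 * dist x y"
      by (auto simp: field_simps)
  qed
  moreover have "0 < 1 / K2" "1 / K2 \<le> 1 / K1" using K by (auto simp: field_simps)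
  ultimately show ?thesis
    unfolding bilipschitz_homeo_germ_def using U W gh[of 0] gU homeomorphism_symD[OF hom] hW
    by (intro conjI exI[of _ "h ` W"] exI[of _ "1 / K2"] exI[of _ "1 / K1"]) auto
qed

lemma bilipschitz_homeo_germ_pullback:
  assumes h: "bilipschitz_homeo_germ h U"
    and y: "\<forall>i. y i \<in> h ` (S \<inter> U) - {0}" "y \<longlonglongrightarrow> 0"
  obtains x where "\<forall>i. x i \<in> S \<inter> U - {0}" "x \<longlonglongrightarrow> 0" "h \<circ> x = y"
proof -
  from h obtain g where hom: "homeomorphism U (h ` U) h g"
    unfolding bilipschitz_homeo_germ_def by blast
  have U: "0 \<in> U" "h 0 = 0" "open (h ` U)"
    using h unfolding bilipschitz_homeo_germ_def by auto
  have gh: "\<And>u. u \<in> U \<Longrightarrow> g (h u) = u" using hom by (simp add: homeomorphism_def)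
  have pullback: "g (y i) \<in> S \<inter> U - {0} \<and> h (g (y i)) = y i" for i
  proof -
    from y(1) obtain u where "u \<in> S \<inter> U" "y i = h u" "y i \<noteq> 0" by blast
    then show ?thesis using gh U(2) by auto
  qed
  have "continuous_on (h ` U) g" using hom by (simp add: homeomorphism_def)
  then have "isCont g (h 0)"
    using U continuous_on_eq_continuous_at[OF U(3)] by blast
  then have "(\<lambda>i. g (y i)) \<longlonglongrightarrow> g 0"
    using U(2) y(2) by (simp add: isCont_tendsto_compose)
  then have "(g \<circ> y) \<longlonglongrightarrow> 0"
    using gh[OF U(1)] U(2) by (simp add: o_def)
  with pullback that[of "g \<circ> y"] show ?thesis by (simp add: o_def fun_eq_iff)
qed

lemma direction_set_bilipschitz_image_mono:
  assumes h: "bilipschitz_homeo_germ h U" and "SSP B"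
    and AB: "direction_set A \<subseteq> direction_set B"
  shows "direction_set (h ` (A \<inter> U)) \<subseteq> direction_set (h ` (B \<inter> U))"
proof
  fix v assume "v \<in> direction_set (h ` (A \<inter> U))"
  then obtain y where y: "\<forall>i. y i \<in> h ` (A \<inter> U) - {0}" "y \<longlonglongrightarrow> 0" "(\<lambda>i. sgn (y i)) \<longlonglongrightarrow> v"
    unfolding mem_direction_set_iff by blast
  from h obtain W K1 K2 where W: "open W" "0 \<in> W" and "0 < K1"
    and lip: "\<forall>x\<in>W. \<forall>y\<in>W. K1 * dist x y \<le> dist (h x) (h y) \<and> dist (h x) (h y) \<le> K2 * dist x y"
    unfolding bilipschitz_homeo_germ_def by blast
  have U: "open U" "0 \<in> U" "h 0 = 0"
    using h unfolding bilipschitz_homeo_germ_def by auto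
  obtain x where x: "\<forall>i. x i \<in> A \<inter> U - {0}" "x \<longlonglongrightarrow> 0" and hx: "h \<circ> x = y"
    using bilipschitz_homeo_germ_pullback[OF h y(1,2)] by blast
  then obtain r a where r: "strict_mono r" and "a \<in> direction_set A"
    and xr: "(\<lambda>i. sgn (x (r i))) \<longlonglongrightarrow> a"
    using direction_set_convergent_subseq by blast
  have xr0: "(x \<circ> r) \<longlonglongrightarrow> 0" and xr_nz: "\<forall>m. (x \<circ> r) m \<noteq> 0"
    using LIMSEQ_subseq_LIMSEQ[OF x(2) r] x(1) by auto
  obtain b where bB: "\<forall>m. b m \<in> B" and close: "relatively_close (x \<circ> r) b"
    using SSP_relatively_close[OF \<open>SSP B\<close> xr_nz xr0 _ AB[THEN subsetD, OF \<open>a \<in> direction_set A\<close>]] xr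
    by (auto simp: o_def)
  have "relatively_close (y \<circ> r) (h \<circ> b)"
    using relatively_close_bilipschitz_image[OF W U(3) \<open>0 < K1\<close> lip xr_nz xr0 close]
    by (simp add: o_assoc hx)
  moreover have "eventually (\<lambda>m. (h \<circ> b) m \<in> h ` (B \<inter> U)) sequentially"
    using topological_tendstoD[OF relatively_close_tendsto_zero[OF xr_nz xr0 close] U(1,2)]
    by eventually_elim (use bB in auto)
  moreover have "\<forall>m. (y \<circ> r) m \<noteq> 0" "(y \<circ> r) \<longlonglongrightarrow> 0" "(\<lambda>m. sgn ((y \<circ> r) m)) \<longlonglongrightarrow> v"
    using y LIMSEQ_subseq_LIMSEQ[OF y(2) r] LIMSEQ_subseq_LIMSEQ[OF y(3) r] by (auto simp: o_def)
  ultimately show "v \<in> direction_set (h ` (B \<inter> U))"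
    using direction_setI_relatively_close by blast
qed

theorem theorem5p9:
  fixes A B :: "'a::euclidean_space set" and h :: "'a \<Rightarrow> 'a" and U :: "'a set"
  assumes "0 \<in> closure A" and "0 \<in> closure B"
    and "bilipschitz_homeo_germ h U"
    and "SSP B" and "SSP (h ` (B \<inter> U))"
  shows "direction_set A \<subseteq> direction_set B \<longleftrightarrow>
         direction_set (h ` (A \<inter> U)) \<subseteq> direction_set (h ` (B \<inter> U))"
proof
  assume "direction_set A \<subseteq> direction_set B"
  then show "direction_set (h ` (A \<inter> U)) \<subseteq> direction_set (h ` (B \<inter> U))"
    using direction_set_bilipschitz_image_mono assms(3,4) by blast
next
  assume image_subset: "direction_set (h ` (A \<inter> U)) \<subseteq> direction_set (h ` (B \<inter> U))"
  obtain g where hom: "homeomorphism U (h ` U) h g"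
    using assms(3) unfolding bilipschitz_homeo_germ_def by blast
  have U: "open U" "0 \<in> U"
    using assms(3) unfolding bilipschitz_homeo_germ_def by auto
  have "g (h u) = u" if "u \<in> U" for u
    using hom that by (simp add: homeomorphism_def)
  moreover have "h ` (S \<inter> U) \<inter> h ` U = h ` (S \<inter> U)" for S by blast
  ultimately have g_image: "g ` (h ` (S \<inter> U) \<inter> h ` U) = S \<inter> U" for S
    by (simp add: image_image)
  have "direction_set (A \<inter> U) \<subseteq> direction_set (B \<inter> U)"
    using direction_set_bilipschitz_image_mono[OF bilipschitz_homeo_germ_inverse[OF assms(3) hom]
        assms(5) image_subset]
    by (simp add: g_image)
  then show "direction_set A \<subseteq> direction_set B"
    by (simp add: direction_set_Int_open[OF U])
qed

end
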